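(* Let $d\ge 2$, $n\ge d+2$, and let $\mathcal{F}$, $B_i$, $\mathcal{X}_v$ be as in the context. For every $v\in[n]$, the family $\mathcal{X}_v\subseteq\binom{[n]\setminus\{v\}}{d}$ has VC-dimension at most $d-1$; consequently $|\mathcal{X}_v|\le\binom{n-1}{d-1}$.
   Context: Let $\mathcal{F}=\{F_1,\dots,F_m\}\subseteq\binom{[n]}{d+1}$ consist of distinct sets and have VC-dimension at most $d$ (no $(d+1)$-set $S$ is shattered, i.e. no $S$ such that every $A\subseteq S$ equals $F\cap S$ for some $F\in\mathcal{F}$). For $i\in[m]$, call $B\subsetneq F_i$ admissible for $F_i$ if $F\cap F_i\neq B$ for every $F\in\mathcal{F}$ (admissible sets exist by the VC-dimension assumption). For each $i$, $B_i$ is a fixed admissible set for $F_i$ of maximum cardinality among all admissible sets for $F_i$. For $v\in[n]$, $\mathcal{X}_v:=\{F_k\setminus\{v\}: k\in[m],\ v\in B_k\}$. *)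

theory Defs
  imports Main
begin

definition shatters :: "'a set set \<Rightarrow> 'a set \<Rightarrow> bool" where
  "shatters Fs S \<longleftrightarrow> (\<forall>A \<subseteq> S. \<exists>F\<in>Fs. F \<inter> S = A)"

definition vc_dim_le :: "'a set set \<Rightarrow> nat \<Rightarrow> bool" where
  "vc_dim_le Fs d \<longleftrightarrow> (\<forall>S. finite S \<and> card S = d + 1 \<longrightarrow> \<not> shatters Fs S)"

definition admissible :: "'a set set \<Rightarrow> 'a set \<Rightarrow> 'a set \<Rightarrow> bool" where
  "admissible Fs Fi B \<longleftrightarrow> B \<subset> Fi \<and> (\<forall>F\<in>Fs. F \<inter> Fi \<noteq> B)"

end

theory Submission
  imports Defs "HOL-Library.Function_Algebras" Complex_Main
begin

text \<open>
  If a d-set S were shattered by the link family X, then S itself would be a member F k - {v}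
  with v \<in> B k, and the trace B k - {v} would be cut out by some F j - {v} with v \<in> F j; this
  gives F j \<inter> F k = B k, contradicting admissibility. The cardinality bound is the Frankl-Pach
  theorem: map each k-set to the indicator of its (k-1)-subsets. Having more sets than
  (|\<Omega>| choose k-1) yields a nontrivial linear relation c, whose up-sums vanish on every set
  of size at most k-1 by double counting. For T with c T \<noteq> 0, inclusion-exclusion then shows
  that every trace sum on T has absolute value |c T| \<noteq> 0, so T is shattered.
\<close>

definition up_sum :: "'a set set \<Rightarrow> ('a set \<Rightarrow> real) \<Rightarrow> 'a set \<Rightarrow> real" where
  "up_sum X c H = (\<Sum>F\<in>X. if H \<subseteq> F then c F else 0)"

definition trace_sum :: "'a set set \<Rightarrow> ('a set \<Rightarrow> real) \<Rightarrow> 'a set \<Rightarrow> 'a set \<Rightarrow> real" where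
  "trace_sum X c R A = (\<Sum>F\<in>X. if F \<inter> R = A then c F else 0)"

lemma abs_trace_sum_eq_abs_up_sum:
  assumes proper_zero: "\<And>R. R \<subset> T \<Longrightarrow> up_sum X c R = 0"
    and "finite T"
  shows "A \<subseteq> R \<Longrightarrow> R \<subseteq> T \<Longrightarrow> \<bar>trace_sum X c R A\<bar> = \<bar>up_sum X c R\<bar>"
proof (induction "card (R - A)" arbitrary: R A rule: less_induct)
  case less
  show ?case
  proof (cases "A = R")
    case True
    have "F \<inter> R = R \<longleftrightarrow> R \<subseteq> F" for F :: "'a set" by blast
    then show ?thesis using True by (simp add: trace_sum_def up_sum_def)
  next
    case False
    then obtain x where x: "x \<in> R" "x \<notin> A" using less.prems by blast
    have "finite R" using less.prems \<open>finite T\<close> finite_subset by blast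
    have smaller: "card (R - {x} - A) < card (R - A)" "card (R - insert x A) < card (R - A)"
      using x \<open>finite R\<close> by (intro psubset_card_mono; auto)+
    have "trace_sum X c (R - {x}) A = trace_sum X c R A + trace_sum X c R (insert x A)"
      unfolding trace_sum_def sum.distrib[symmetric] using x less.prems(1)
      by (intro sum.cong) auto
    moreover have "trace_sum X c (R - {x}) A = 0"
    proof -
      have "A \<subseteq> R - {x}" "R - {x} \<subseteq> T" "R - {x} \<subset> T" using less.prems x by auto
      then show ?thesis using less.hyps[OF smaller(1)] proper_zero by simp
    qed
    moreover have "\<bar>trace_sum X c R (insert x A)\<bar> = \<bar>up_sum X c R\<bar>"
      using less.hyps[OF smaller(2)] less.prems x by auto
    ultimately show ?thesis by linarith
  qed
qed

lemma sum_up_sum_insert: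
  assumes "finite \<Omega>" and "\<And>F. F \<in> X \<Longrightarrow> F \<subseteq> \<Omega> \<and> card F = k" and "finite H"
  shows "(\<Sum>y\<in>\<Omega> - H. up_sum X c (insert y H)) = real (k - card H) * up_sum X c H"
proof -
  have count: "(\<Sum>y\<in>\<Omega> - H. if insert y H \<subseteq> F then c F else 0)
      = (if H \<subseteq> F then real (k - card H) * c F else 0)" if "F \<in> X" for F
  proof (cases "H \<subseteq> F")
    case True
    have "(\<Sum>y\<in>\<Omega> - H. if insert y H \<subseteq> F then c F else 0) = (\<Sum>y\<in>F - H. c F)"
      using True assms(1) assms(2)[OF that] by (intro sum.mono_neutral_cong_right) auto
    also have "\<dots> = real (k - card H) * c F"
      using True assms \<open>F \<in> X\<close> by (simp add: card_Diff_subset)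
    finally show ?thesis using True by simp
  qed simp
  have "(\<Sum>y\<in>\<Omega> - H. up_sum X c (insert y H))
      = (\<Sum>F\<in>X. \<Sum>y\<in>\<Omega> - H. if insert y H \<subseteq> F then c F else 0)"
    unfolding up_sum_def by (rule sum.swap)
  also have "\<dots> = real (k - card H) * up_sum X c H"
    unfolding up_sum_def sum_distrib_left using count
    by (intro sum.cong) (simp_all add: if_distrib cong: if_cong)
  finally show ?thesis .
qed

lemma up_sum_vanishes_below:
  assumes "finite \<Omega>" and uniform: "\<And>F. F \<in> X \<Longrightarrow> F \<subseteq> \<Omega> \<and> card F = k" and "j < k"
    and level_zero: "\<And>G. G \<subseteq> \<Omega> \<Longrightarrow> card G = j \<Longrightarrow> up_sum X c G = 0"
  shows "H \<subseteq> \<Omega> \<Longrightarrow> card H \<le> j \<Longrightarrow> up_sum X c H = 0"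
proof (induction "j - card H" arbitrary: H rule: less_induct)
  case less
  show ?case
  proof (cases "card H = j")
    case False
    have "finite H" using less.prems \<open>finite \<Omega>\<close> finite_subset by blast
    have "up_sum X c (insert y H) = 0" if "y \<in> \<Omega> - H" for y
      using that less False \<open>finite H\<close> by (intro less.hyps) auto
    then have "real (k - card H) * up_sum X c H = 0"
      using sum_up_sum_insert[of \<Omega> X k H c, OF \<open>finite \<Omega>\<close> uniform \<open>finite H\<close>] by simp
    then show ?thesis using less.prems \<open>j < k\<close> by simp
  qed (use less.prems level_zero in auto)
qed

lemma (in vector_space) exists_nontrivial_relation_if_card_gt_span:
  assumes "finite X" "finite S" "card S < card X" "w ` X \<subseteq> span S"
  shows "\<exists>c. (\<exists>x\<in>X. c x \<noteq> 0) \<and> (\<Sum>x\<in>X. c x *s w x) = 0"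
proof (cases "inj_on w X")
  case True
  have "dependent (w ` X)"
    using independent_span_bound[OF \<open>finite S\<close> _ assms(4)] card_image[OF True] assms(3) by linarith
  then obtain u where u: "\<exists>v\<in>w ` X. u v \<noteq> 0" "(\<Sum>v\<in>w ` X. u v *s v) = 0"
    unfolding dependent_finite[OF finite_imageI[OF \<open>finite X\<close>]] by blast
  have "(\<Sum>x\<in>X. u (w x) *s w x) = 0"
    using u(2) by (simp add: sum.reindex[OF True])
  then show ?thesis using u(1) by (intro exI[of _ "u \<circ> w"]) auto
next
  case False
  then obtain x y where xy: "x \<in> X" "y \<in> X" "x \<noteq> y" "w x = w y"
    by (auto simp: inj_on_def)
  let ?c = "\<lambda>z. (if z = x then 1 else 0) - (if z = y then 1 else 0)"
  have "?c z *s w z = (if z = x then w z else 0) - (if z = y then w z else 0)" for z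
    by (simp add: scale_left_diff_distrib)
  then have "(\<Sum>z\<in>X. ?c z *s w z) = w x - w y"
    using xy \<open>finite X\<close> by (simp add: sum_subtractf)
  then show ?thesis using xy by (intro exI[of _ ?c]) auto
qed

lemma sum_fun_apply: "sum f A x = (\<Sum>a\<in>A. f a x)"
  by (induction A rule: infinite_finite_induct) auto

interpretation real_fun: vector_space "\<lambda>(r::real) (f::'a \<Rightarrow> real) x. r * f x"
  by unfold_locales (auto simp: fun_eq_iff algebra_simps)

lemma exists_up_sum_relation:
  fixes X :: "'a set set"
  assumes "finite \<Omega>" and uniform: "\<And>F. F \<in> X \<Longrightarrow> F \<subseteq> \<Omega> \<and> card F = k"
    and big: "card X > card \<Omega> choose (k - 1)"
  shows "\<exists>c. (\<exists>T\<in>X. c T \<noteq> 0) \<and> (\<forall>G. G \<subseteq> \<Omega> \<longrightarrow> card G = k - 1 \<longrightarrow> up_sum X c G = 0)"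
proof -
  define Gs where "Gs = {G. G \<subseteq> \<Omega> \<and> card G = k - 1}"
  define \<delta> :: "'a set \<Rightarrow> 'a set \<Rightarrow> real" where "\<delta> G = (\<lambda>H. if H = G then 1 else 0)" for G
  define w where "w F = (\<Sum>G\<in>{G\<in>Gs. G \<subseteq> F}. \<delta> G)" for F
  have "finite Gs" "finite X"
    using uniform \<open>finite \<Omega>\<close> unfolding Gs_def
    by (auto intro: finite_subset[of _ "Pow \<Omega>"])
  have "card (\<delta> ` Gs) < card X"
    using card_image_le[OF \<open>finite Gs\<close>, of \<delta>] n_subsets[OF \<open>finite \<Omega>\<close>] big
    unfolding Gs_def by simp
  moreover have "w ` X \<subseteq> real_fun.span (\<delta> ` Gs)"
    unfolding w_def by (auto intro!: real_fun.span_sum intro: real_fun.span_base)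
  ultimately obtain c where c: "\<exists>T\<in>X. c T \<noteq> 0" "(\<Sum>F\<in>X. (\<lambda>H. c F * w F H)) = 0"
    using real_fun.exists_nontrivial_relation_if_card_gt_span[OF \<open>finite X\<close>]
      \<open>finite Gs\<close> by blast
  have "up_sum X c G = 0" if "G \<in> Gs" for G
  proof -
    have "w F G = (if G \<subseteq> F then 1 else 0)" for F
      using that \<open>finite Gs\<close> unfolding w_def \<delta>_def sum_fun_apply by simp
    then have "up_sum X c G = (\<Sum>F\<in>X. (\<lambda>H. c F * w F H)) G"
      unfolding up_sum_def sum_fun_apply by (intro sum.cong) auto
    then show ?thesis using c(2) by simp
  qed
  then show ?thesis using c(1) unfolding Gs_def by blast
qed

theorem frankl_pach:
  fixes X :: "'a set set"
  assumes "finite \<Omega>" and uniform: "\<And>F. F \<in> X \<Longrightarrow> F \<subseteq> \<Omega> \<and> card F = k"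
    and no_shattered: "\<And>T. finite T \<Longrightarrow> card T = k \<Longrightarrow> \<not> shatters X T"
  shows "card X \<le> card \<Omega> choose (k - 1)"
proof (rule ccontr)
  assume "\<not> ?thesis"
  then obtain c where "\<exists>T\<in>X. c T \<noteq> 0"
    and top_zero: "\<And>G. G \<subseteq> \<Omega> \<Longrightarrow> card G = k - 1 \<Longrightarrow> up_sum X c G = 0"
    using exists_up_sum_relation[of \<Omega> X k, OF \<open>finite \<Omega>\<close> uniform] by auto
  then obtain T where T: "T \<in> X" "c T \<noteq> 0" by blast
  have "T \<subseteq> \<Omega>" "card T = k" "finite T"
    using uniform[OF T(1)] \<open>finite \<Omega>\<close> finite_subset by auto
  have "k \<noteq> 0"
    using no_shattered[of "{}"] T(1) \<open>card T = k\<close> by (auto simp: shatters_def)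
  have proper_zero: "up_sum X c R = 0" if "R \<subset> T" for R
  proof (rule up_sum_vanishes_below[of \<Omega> X k "k - 1" c, OF \<open>finite \<Omega>\<close> uniform _ top_zero])
    show "card R \<le> k - 1"
      using psubset_card_mono[OF \<open>finite T\<close> that] \<open>card T = k\<close> by simp
  qed (use that \<open>T \<subseteq> \<Omega>\<close> \<open>k \<noteq> 0\<close> in auto)
  have "up_sum X c T = (\<Sum>F\<in>X. if F = T then c F else 0)"
    unfolding up_sum_def
  proof (intro sum.cong refl)
    fix F assume "F \<in> X"
    then have "F \<subseteq> \<Omega>" "card F = card T" using uniform \<open>card T = k\<close> by auto
    then have "T \<subseteq> F \<longleftrightarrow> F = T"
      using card_subset_eq[of F T] \<open>finite \<Omega>\<close> finite_subset by auto
    then show "(if T \<subseteq> F then c F else 0) = (if F = T then c F else 0)" by simp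
  qed
  also have "\<dots> = c T"
  proof -
    have "finite X" using uniform \<open>finite \<Omega>\<close> finite_subset[of X "Pow \<Omega>"] by blast
    then show ?thesis using T(1) by simp
  qed
  finally have "up_sum X c T = c T" .
  have "shatters X T"
    unfolding shatters_def
  proof (intro allI impI)
    fix A assume "A \<subseteq> T"
    have "\<bar>trace_sum X c T A\<bar> = \<bar>c T\<bar>"
      using abs_trace_sum_eq_abs_up_sum[of T X c, OF proper_zero \<open>finite T\<close> \<open>A \<subseteq> T\<close> order_refl]
        \<open>up_sum X c T = c T\<close> by simp
    then have "trace_sum X c T A \<noteq> 0" using T(2) by auto
    then show "\<exists>F\<in>X. F \<inter> T = A"
      unfolding trace_sum_def using sum.neutral by force
  qed
  then show False using no_shattered \<open>finite T\<close> \<open>card T = k\<close> by blast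
qed

lemma mem_if_shatters_uniform:
  assumes "\<And>F. F \<in> X \<Longrightarrow> finite F \<and> card F = k" "card S = k" "shatters X S"
  shows "S \<in> X"
proof -
  obtain F where "F \<in> X" "F \<inter> S = S" using \<open>shatters X S\<close> unfolding shatters_def by blast
  then have "S = F" using assms(1,2) card_subset_eq[of F S] by auto
  then show ?thesis using \<open>F \<in> X\<close> by simp
qed

lemma link_family_uniform:
  assumes "\<And>i. i \<in> I \<Longrightarrow> B i \<subseteq> F i"
    and "\<And>i. i \<in> I \<Longrightarrow> finite (F i) \<and> card (F i) = Suc k"
  shows "{F i - {v} | i. i \<in> I \<and> v \<in> B i} \<subseteq> {S. finite S \<and> card S = k}"
  using assms by fastforce

lemma link_family_no_shattered:
  fixes F B :: "'i \<Rightarrow> 'a set"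
  assumes admissible: "\<And>i. i \<in> I \<Longrightarrow> admissible (F ` I) (F i) (B i)"
    and card_F: "\<And>i. i \<in> I \<Longrightarrow> finite (F i) \<and> card (F i) = Suc k"
    and "card S = k"
  shows "\<not> shatters {F i - {v} | i. i \<in> I \<and> v \<in> B i} S"
proof
  let ?X = "{F i - {v} | i. i \<in> I \<and> v \<in> B i}"
  assume shatters: "shatters ?X S"
  have B_sub: "B i \<subseteq> F i" if "i \<in> I" for i
    using admissible[OF that] unfolding admissible_def by blast
  have "finite T \<and> card T = k" if "T \<in> ?X" for T
    using link_family_uniform[of I B F k v, OF B_sub card_F] that by blast
  then have "S \<in> ?X" by (rule mem_if_shatters_uniform[OF _ \<open>card S = k\<close> shatters])
  then obtain i where i: "i \<in> I" "v \<in> B i" "S = F i - {v}" by blast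
  then have "B i - {v} \<subseteq> S" using B_sub by blast
  then obtain T where "T \<in> ?X" "T \<inter> S = B i - {v}"
    by (elim shatters[unfolded shatters_def, rule_format, THEN bexE])
  then obtain j where j: "j \<in> I" "v \<in> B j" "(F j - {v}) \<inter> S = B i - {v}" by blast
  \<comment> \<open>Adding back v, which lies in both sets, lifts the trace on S to a trace on F i.\<close>
  have "v \<in> F i" "v \<in> F j" using i(1,2) j(1,2) B_sub by auto
  then have "F j \<inter> F i = insert v ((F j - {v}) \<inter> S)" using i(3) by auto
  then have "F j \<inter> F i = B i" using j(3) i(2) by auto
  then show False using admissible[OF i(1)] j(1) unfolding admissible_def by blast
qed

theorem claim3p3:
  fixes d n m :: nat and F B :: "nat \<Rightarrow> nat set"
  assumes "d \<ge> 2" and "n \<ge> d + 2"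
    and "inj_on F {1..m}"
    and "\<And>i. i \<in> {1..m} \<Longrightarrow> F i \<subseteq> {1..n} \<and> card (F i) = d + 1"
    and "vc_dim_le (F ` {1..m}) d"
    and "\<And>i. i \<in> {1..m} \<Longrightarrow> admissible (F ` {1..m}) (F i) (B i)"
    and "\<And>i B'. i \<in> {1..m} \<Longrightarrow> admissible (F ` {1..m}) (F i) B' \<Longrightarrow> card B' \<le> card (B i)"
    and "v \<in> {1..n}"
  defines "X \<equiv> {F k - {v} | k. k \<in> {1..m} \<and> v \<in> B k}"
  shows "X \<subseteq> {S. S \<subseteq> {1..n} - {v} \<and> card S = d}
         \<and> vc_dim_le X (d - 1)
         \<and> card X \<le> (n - 1) choose (d - 1)"
proof -
  have B_sub: "B i \<subseteq> F i" if "i \<in> {1..m}" for i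
    using assms(6)[OF that] unfolding admissible_def by blast
  have card_F: "finite (F i) \<and> card (F i) = Suc d" if "i \<in> {1..m}" for i
    using assms(4)[OF that] finite_subset by auto
  have uniform: "X \<subseteq> {S. S \<subseteq> {1..n} - {v} \<and> card S = d}"
    using link_family_uniform[of "{1..m}" B F d v, OF B_sub card_F] assms(4) unfolding X_def by blast
  have no_shattered: "\<not> shatters X S" if "card S = d" for S
    unfolding X_def using link_family_no_shattered[OF assms(6) card_F that] .
  then have "vc_dim_le X (d - 1)"
    unfolding vc_dim_le_def using \<open>d \<ge> 2\<close> by auto
  moreover have "card X \<le> card ({1..n} - {v}) choose (d - 1)"
    using frankl_pach[of "{1..n} - {v}" X d] uniform no_shattered by blast
  ultimately show ?thesis using uniform \<open>v \<in> {1..n}\<close> by simp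
qed

end
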